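(* Let $S=\{0,1,2,\dots\}$, $\lambda,\mu>0$, $\theta=\lambda/\mu$, and let $X$ be the continuous-time Markov chain on $S$ with rates $q(i,i+1)=\lambda$; $q(i,i-k)=\mu$ for $i\ge1$, $1\le k\le i$; $q(i,i)=-(\lambda+i\mu)$; all other off-diagonal rates $0$. Let $\tau$ be a probability on $S$, $\mathbf P^{(\tau)}$ the law of $X$ with initial distribution $\tau$, $F^{(\tau)}_{X(t)}(x)=\mathbf P^{(\tau)}\{X(t)\le x\}$, $T(x)=\sum_{n\le x}\tau(n)$, and $\Pi^*(x)=\sum_{n\le x}\pi^*(n)$ with $\pi^*(n)=\theta^n(n+1)/(\theta+1)_{n+1}$. Then for every $t\ge0$, $$\sup_{x\in\mathbb R}|\Pi^*(x)-F^{(\tau)}_{X(t)}(x)|\le\sup_{x\in\mathbb R}|\Pi^*(x)-T(x)|\cdot\exp\{-\mu t-\theta(e^{-\mu t}+\mu t-1)\}.$$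
   Context: $(a)_n$ denotes the rising factorial $a(a+1)\cdots(a+n-1)$, $(a)_0=1$. *)

theory Defs
  imports "HOL-Analysis.Analysis"
begin

definition out_rate :: "real \<Rightarrow> real \<Rightarrow> nat \<Rightarrow> real" where
  "out_rate lam mu i = lam + real i * mu"

text \<open>Minimal (Feller) construction of the transition function, split by the number
  of jumps n: jump_trans lam mu n t i j = P_i(X(t) = j and exactly n jumps in [0,t]).
  From i the chain jumps to i+1 at rate lam and to each of 0,...,i-1 (i.e. i-k, 1<=k<=i)
  at rate mu.\<close>
fun jump_trans :: "real \<Rightarrow> real \<Rightarrow> nat \<Rightarrow> real \<Rightarrow> nat \<Rightarrow> nat \<Rightarrow> real" where
  "jump_trans lam mu 0 t i j = (if i = j then exp (- out_rate lam mu i * t) else 0)"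
| "jump_trans lam mu (Suc n) t i j =
     integral {0..t} (\<lambda>s. exp (- out_rate lam mu i * s) *
        (lam * jump_trans lam mu n (t - s) (Suc i) j
         + mu * (\<Sum>k<i. jump_trans lam mu n (t - s) k j)))"

text \<open>Transition probabilities p_t(i,j) of the chain X (minimal chain; it is non-explosive).\<close>
definition trans_prob :: "real \<Rightarrow> real \<Rightarrow> real \<Rightarrow> nat \<Rightarrow> nat \<Rightarrow> real" where
  "trans_prob lam mu t i j = (\<Sum>n. jump_trans lam mu n t i j)"

definition distF :: "real \<Rightarrow> real \<Rightarrow> (nat \<Rightarrow> real) \<Rightarrow> real \<Rightarrow> real \<Rightarrow> real" where
  "distF lam mu tau t x = (\<Sum>j\<in>{j::nat. real j \<le> x}. (\<Sum>i. tau i * trans_prob lam mu t i j))"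

definition cdfT :: "(nat \<Rightarrow> real) \<Rightarrow> real \<Rightarrow> real" where
  "cdfT tau x = (\<Sum>n\<in>{n::nat. real n \<le> x}. tau n)"

definition pi_star :: "real \<Rightarrow> nat \<Rightarrow> real" where
  "pi_star \<theta> n = \<theta> ^ n * real (n + 1) / pochhammer (\<theta> + 1) (n + 1)"

definition Pi_star :: "real \<Rightarrow> real \<Rightarrow> real" where
  "Pi_star \<theta> x = (\<Sum>n\<in>{n::nat. real n \<le> x}. pi_star \<theta> n)"

end

theory Submission
  imports Defs
begin

(* Write Q r = (sum n<r. pi*(n)) = 1 - theta^r / (theta+1)_r and V_m(t,i) = P_i(X(t) <= m).
   The candidate
     V_m(t,i) = Q(m+1) + (sum k<=m. K_(m,k)(t) * ([i <= k] - Q(k+1))),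
     K_(m,k)(t) = exp(-(lam + mu(k+1)) t) * (theta (1 - exp(-mu t)))^(m-k) / (m-k)!,
   solves the backward equation with V_m(0,i) = [i <= m]: the coefficients satisfy
   K_k' = -(lam + mu(k+1)) K_k + lam K_(k+1), while the balance of pi* across the cut between
   {..k} and {k<..} makes the generator send c_k = [i <= k] - Q(k+1) to
   -(lam + mu(k+1)) c_k + lam c_(k-1).  The expansion of the minimal chain by number of jumps
   converges to V_m, since its remainder obeys a homogeneous Volterra recursion whose iterates
   shrink by a factor 2.  Averaging over tau yields
     Pi*(m) - F(m) = (sum k<=m. K_(m,k)(t) * (Pi*(k) - T(k))),
   and sum_k K_(m,k)(t) <= exp(-(lam + mu) t) * exp(theta (1 - exp(-mu t))), which is the
   stated factor. *)

section \<open>Integrals against exponential weights\<close>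

lemma has_integral_reflect_Icc:
  fixes f :: "real \<Rightarrow> 'a::real_normed_vector"
  assumes "(f has_integral I) {a..b}"
  shows "((\<lambda>s. f (a + b - s)) has_integral I) {a..b}"
proof -
  have "((\<lambda>x. f (-x)) has_integral I) {-b..-a}"
    using assms by simp
  from has_integral_shift_real_ivl[OF this, of "- (a + b)"]
  show ?thesis by (simp add: minus_diff_eq add.commute)
qed

lemma exp_convolution_eq:
  fixes h :: "real \<Rightarrow> real"
  assumes "continuous_on {0..t} h"
  shows "integral {0..t} (\<lambda>s. exp (- q * s) * h (t - s))
       = exp (- q * t) * integral {0..t} (\<lambda>u. exp (q * u) * h u)"
proof -
  have "((\<lambda>u. exp (- q * t) * (exp (q * u) * h u))
          has_integral exp (- q * t) * integral {0..t} (\<lambda>u. exp (q * u) * h u)) {0..t}"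
    using assms
    by (intro has_integral_mult_right integrable_integral integrable_continuous_interval
        continuous_intros)
  from has_integral_reflect_Icc[OF this]
  have "((\<lambda>s. exp (- q * t) * (exp (q * (t - s)) * h (t - s)))
          has_integral exp (- q * t) * integral {0..t} (\<lambda>u. exp (q * u) * h u)) {0..t}"
    by simp
  moreover have "exp (- q * t) * exp (q * (t - s)) = exp (- q * s)" for s
    by (simp add: exp_add[symmetric] algebra_simps)
  ultimately show ?thesis
    by (simp add: integral_unique mult.assoc[symmetric])
qed

lemma continuous_on_exp_convolution:
  fixes h :: "real \<Rightarrow> real"
  assumes "continuous_on {0..T} h"
  shows "continuous_on {0..T} (\<lambda>t. integral {0..t} (\<lambda>s. exp (- q * s) * h (t - s)))"
proof -
  have "continuous_on {0..T} (\<lambda>t. exp (- q * t) * integral {0..t} (\<lambda>u. exp (q * u) * h u))"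
    using assms
    by (intro continuous_intros indefinite_integral_continuous_1 integrable_continuous_interval)
  moreover have "exp (- q * t) * integral {0..t} (\<lambda>u. exp (q * u) * h u)
      = integral {0..t} (\<lambda>s. exp (- q * s) * h (t - s))" if "t \<in> {0..T}" for t
    using that by (intro exp_convolution_eq[symmetric] continuous_on_subset[OF assms]) auto
  ultimately show ?thesis
    by (rule continuous_on_eq)
qed

lemma has_integral_exp_convolution:
  fixes h :: "real \<Rightarrow> real"
  assumes "continuous_on {0..t} h"
  shows "((\<lambda>s. exp (- q * s) * h (t - s))
           has_integral integral {0..t} (\<lambda>s. exp (- q * s) * h (t - s))) {0..t}"
proof -
  have "continuous_on {0..t} (\<lambda>s. h (t - s))"
    by (rule continuous_on_compose2[OF assms]) (auto intro: continuous_on_op_minus)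
  then have "continuous_on {0..t} (\<lambda>s. exp (- q * s) * h (t - s))"
    by (rule continuous_on_mult[rotated]) (intro continuous_intros)
  then show ?thesis
    by (intro integrable_integral integrable_continuous_interval)
qed

lemma has_integral_exp_minus:
  fixes c t :: real
  assumes "c \<noteq> 0" "t \<ge> 0"
  shows "((\<lambda>s. exp (- c * s)) has_integral (1 - exp (- c * t)) / c) {0..t}"
proof -
  have "((\<lambda>s. exp (- c * s)) has_integral (- exp (- c * t) / c - (- exp (- c * 0) / c))) {0..t}"
    using assms
    by (intro fundamental_theorem_of_calculus)
       (auto intro!: derivative_eq_intros simp flip: has_real_derivative_iff_has_vector_derivative)
  then show ?thesis
    by (simp add: diff_divide_distrib)
qed

section \<open>The jump expansion\<close>

(* jumps lam mu f i = sum over j ~= i of q(i,j) * f j, the off-diagonal part of the generator. *)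
definition jumps :: "real \<Rightarrow> real \<Rightarrow> (nat \<Rightarrow> real) \<Rightarrow> nat \<Rightarrow> real" where
  "jumps lam mu f i = lam * f (Suc i) + mu * (\<Sum>k<i. f k)"

lemma jumps_add: "jumps lam mu (\<lambda>k. f k + g k) i = jumps lam mu f i + jumps lam mu g i"
  by (simp add: jumps_def sum.distrib algebra_simps)

lemma jumps_diff: "jumps lam mu (\<lambda>k. f k - g k) i = jumps lam mu f i - jumps lam mu g i"
  by (simp add: jumps_def sum_subtractf algebra_simps)

lemma jumps_sum: "jumps lam mu (\<lambda>k. \<Sum>x\<in>A. f x k) i = (\<Sum>x\<in>A. jumps lam mu (f x) i)"
  by (simp add: jumps_def sum.distrib sum_distrib_left sum.swap[of _ A])

lemma jumps_cmult: "jumps lam mu (\<lambda>k. c * f k) i = c * jumps lam mu f i"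
  by (simp add: jumps_def sum_distrib_left algebra_simps)

lemma jumps_const: "jumps lam mu (\<lambda>k. c) i = out_rate lam mu i * c"
  by (simp add: jumps_def out_rate_def algebra_simps)

lemma jump_trans_Suc_jumps:
  "jump_trans lam mu (Suc n) t i j =
     integral {0..t} (\<lambda>s. exp (- out_rate lam mu i * s)
       * jumps lam mu (\<lambda>k. jump_trans lam mu n (t - s) k j) i)"
  by (simp add: jumps_def)

lemma continuous_on_jump_trans:
  "continuous_on {0..T} (\<lambda>t. jump_trans lam mu n t i j)"
proof (induction n arbitrary: T i)
  case 0
  show ?case by (cases "i = j") (auto intro!: continuous_intros)
next
  case (Suc n)
  have "continuous_on {0..T} (\<lambda>u. jumps lam mu (\<lambda>k. jump_trans lam mu n u k j) i)"
    unfolding jumps_def by (intro continuous_intros Suc.IH)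
  from continuous_on_exp_convolution[OF this, of "out_rate lam mu i"]
  show ?case
    unfolding jump_trans_Suc_jumps .
qed

lemma has_integral_jump_trans:
  "((\<lambda>s. exp (- out_rate lam mu i * s) * jumps lam mu (\<lambda>k. jump_trans lam mu n (t - s) k j) i)
      has_integral jump_trans lam mu (Suc n) t i j) {0..t}"
proof -
  have "continuous_on {0..t} (\<lambda>u. jumps lam mu (\<lambda>k. jump_trans lam mu n u k j) i)"
    unfolding jumps_def by (intro continuous_intros continuous_on_jump_trans)
  from has_integral_exp_convolution[OF this, of "out_rate lam mu i"]
  show ?thesis
    unfolding jump_trans_Suc_jumps .
qed

section \<open>The stationary distribution and the generator\<close>

definition cum_pi_star :: "real \<Rightarrow> nat \<Rightarrow> real" where
  "cum_pi_star \<theta> r = (\<Sum>n<r. pi_star \<theta> n)"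

lemma cum_pi_star_eq:
  assumes "\<theta> > 0"
  shows "cum_pi_star \<theta> r = 1 - \<theta> ^ r / pochhammer (\<theta> + 1) r"
proof (induction r)
  case 0
  show ?case by (simp add: cum_pi_star_def)
next
  case (Suc r)
  define P where "P = pochhammer (\<theta> + 1) r"
  define D where "D = \<theta> + 1 + real r"
  have "P > 0" "D > 0"
    using assms by (auto simp: P_def D_def intro!: pochhammer_pos)
  have "1 - \<theta> ^ r / P + \<theta> ^ r * (real r + 1) / (P * D)
      = 1 - (\<theta> ^ r * D - \<theta> ^ r * (real r + 1)) / (P * D)"
    using \<open>P > 0\<close> \<open>D > 0\<close> by (simp add: field_simps)
  also have "\<theta> ^ r * D - \<theta> ^ r * (real r + 1) = \<theta> ^ Suc r"
    by (simp add: D_def algebra_simps)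
  finally show ?case
    using Suc
    by (simp add: cum_pi_star_def pi_star_def pochhammer_Suc P_def D_def add_ac)
qed

lemma cum_pi_star_nonneg: "\<theta> > 0 \<Longrightarrow> 0 \<le> cum_pi_star \<theta> r"
  unfolding cum_pi_star_def pi_star_def
  by (intro sum_nonneg divide_nonneg_pos) (auto intro!: pochhammer_pos)

lemma cum_pi_star_le_1: "\<theta> > 0 \<Longrightarrow> cum_pi_star \<theta> r \<le> 1"
  using pochhammer_pos[of "\<theta> + 1" r] by (simp add: cum_pi_star_eq)

(* Balance of the probability flux of pi* across the cut between {..r} and {r<..}. *)
lemma cum_pi_star_balance:
  assumes "lam > 0" "mu > 0"
  shows "(lam + mu * (real r + 1)) * cum_pi_star (lam / mu) (Suc r) - lam * cum_pi_star (lam / mu) r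
       = mu * (real r + 1)"
proof -
  define \<theta> where "\<theta> = lam / mu"
  define H where "H = \<theta> ^ r / pochhammer (\<theta> + 1) r"
  have "\<theta> > 0" and lam: "lam = mu * \<theta>"
    using assms by (simp_all add: \<theta>_def)
  have Q: "cum_pi_star \<theta> r = 1 - H"
    using cum_pi_star_eq[OF \<open>\<theta> > 0\<close>, of r] by (simp add: H_def)
  have "cum_pi_star \<theta> (Suc r) = 1 - H * \<theta> / (\<theta> + 1 + real r)"
    using cum_pi_star_eq[OF \<open>\<theta> > 0\<close>, of "Suc r"] by (simp add: H_def pochhammer_Suc field_simps)
  moreover have "\<theta> + 1 + real r > 0"
    using \<open>\<theta> > 0\<close> by simp
  ultimately have Q_Suc: "cum_pi_star \<theta> (Suc r) * (\<theta> + 1 + real r) = \<theta> + 1 + real r - H * \<theta>"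
    by (simp add: field_simps)
  have "(lam + mu * (real r + 1)) * cum_pi_star \<theta> (Suc r) - lam * cum_pi_star \<theta> r
      = mu * (cum_pi_star \<theta> (Suc r) * (\<theta> + 1 + real r) - \<theta> * cum_pi_star \<theta> r)"
    by (simp add: lam algebra_simps)
  also have "\<dots> = mu * (real r + 1)"
    unfolding Q_Suc Q by (simp add: algebra_simps)
  finally show ?thesis
    by (simp add: \<theta>_def)
qed

lemma jumps_indicator_atMost:
  "jumps lam mu (\<lambda>l. if l \<le> k then 1 else 0) i
     = lam * (if i < k then 1 else 0) + mu * real (min i (Suc k))"
proof -
  have "(\<Sum>l<i. if l \<le> k then 1 else 0 :: real) = real (min i (Suc k))"
    by (induction i) (auto simp: min_def)
  then show ?thesis by (simp add: jumps_def)
qed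

lemma generator_centered_indicator:
  fixes Q :: "nat \<Rightarrow> real"
  assumes "(lam + mu * (real k + 1)) * Q (Suc k) - lam * Q k = mu * (real k + 1)"
  defines "c \<equiv> \<lambda>l. (if l \<le> k then 1 else 0) - Q (Suc k)"
  shows "jumps lam mu c i - out_rate lam mu i * c i
       = - (lam + mu * (real k + 1)) * c i + lam * ((if i < k then 1 else 0) - Q k)"
proof -
  have "jumps lam mu c i - out_rate lam mu i * c i
      = lam * (if i < k then 1 else 0) + mu * real (min i (Suc k))
        - (lam + real i * mu) * (if i \<le> k then 1 else 0)"
    unfolding c_def jumps_diff jumps_const jumps_indicator_atMost
    by (simp add: out_rate_def algebra_simps)
  also have "\<dots> = - (lam + mu * (real k + 1)) * c i + lam * ((if i < k then 1 else 0) - Q k)"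
    using assms(1) unfolding c_def
    by (cases rule: linorder_cases[of i k]) (simp_all add: min_absorb1 min_absorb2 algebra_simps)
  finally show ?thesis .
qed

lemma generator_cdf_mixture:
  fixes K Q :: "nat \<Rightarrow> real"
  assumes K: "K (Suc m) = 0" and Q: "Q 0 = 0"
    and balance: "\<And>r. (lam + mu * (real r + 1)) * Q (Suc r) - lam * Q r = mu * (real r + 1)"
  defines "c \<equiv> \<lambda>k l. (if l \<le> k then 1 else 0) - Q (Suc k)"
  defines "V \<equiv> \<lambda>l. Q (Suc m) + (\<Sum>k\<le>m. K k * c k l)"
  shows "jumps lam mu V i - out_rate lam mu i * V i
       = (\<Sum>k\<le>m. (- (lam + mu * (real k + 1)) * K k + lam * K (Suc k)) * c k i)"
proof -
  define d where "d = (\<lambda>k. (if i < k then 1 else 0) - Q k)"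
  have shift: "(\<Sum>k\<le>m. K k * d k) = (\<Sum>k\<le>m. K (Suc k) * c k i)"
  proof -
    have "(\<Sum>k\<le>Suc m. K k * d k) = (\<Sum>k\<le>m. K (Suc k) * c k i)"
      unfolding sum.atMost_Suc_shift by (simp add: d_def c_def Q less_Suc_eq_le)
    then show ?thesis using K by simp
  qed
  have "jumps lam mu V i - out_rate lam mu i * V i
      = (\<Sum>k\<le>m. K k * (jumps lam mu (c k) i - out_rate lam mu i * c k i))"
    unfolding V_def jumps_add jumps_const jumps_sum jumps_cmult
    by (simp add: sum_distrib_left algebra_simps sum_subtractf)
  also have "\<dots> = (\<Sum>k\<le>m. K k * (- (lam + mu * (real k + 1)) * c k i + lam * d k))"
    unfolding c_def d_def by (simp add: generator_centered_indicator[OF balance])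
  also have "\<dots> = (\<Sum>k\<le>m. - (lam + mu * (real k + 1)) * K k * c k i) + lam * (\<Sum>k\<le>m. K k * d k)"
    by (subst sum_distrib_left, subst sum.distrib[symmetric], rule sum.cong) (simp_all add: algebra_simps)
  also have "\<dots> = (\<Sum>k\<le>m. (- (lam + mu * (real k + 1)) * K k + lam * K (Suc k)) * c k i)"
    unfolding shift
    by (subst sum_distrib_left, subst sum.distrib[symmetric], rule sum.cong) (simp_all add: algebra_simps)
  finally show ?thesis .
qed

section \<open>The distribution function in closed form\<close>

definition decay_coeff :: "real \<Rightarrow> real \<Rightarrow> nat \<Rightarrow> real \<Rightarrow> nat \<Rightarrow> real" where
  "decay_coeff lam mu m t k =
     (if k \<le> m then exp (- (lam + mu * (real k + 1)) * t)
        * ((lam / mu) * (1 - exp (- mu * t))) ^ (m - k) / fact (m - k) else 0)"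

lemma decay_coeff_nonneg:
  "lam \<ge> 0 \<Longrightarrow> mu > 0 \<Longrightarrow> t \<ge> 0 \<Longrightarrow> decay_coeff lam mu m t k \<ge> 0"
  by (simp add: decay_coeff_def)

lemma has_real_derivative_decay_coeff:
  assumes "mu \<noteq> 0"
  shows "((\<lambda>t. decay_coeff lam mu m t k) has_real_derivative
           - (lam + mu * (real k + 1)) * decay_coeff lam mu m t k + lam * decay_coeff lam mu m t (Suc k))
         (at t)"
proof -
  define c where "c = lam + mu * (real k + 1)"
  define A where "A = (\<lambda>t. (lam / mu) * (1 - exp (- mu * t)))"
  consider "m < k" | "k = m" | r where "m - k = Suc r" "m - Suc k = r" "k < m"
    by (metis Suc_diff_Suc linorder_less_linear diff_Suc_1)
  then show ?thesis
  proof cases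
    case 1
    then show ?thesis by (simp add: decay_coeff_def)
  next
    case 2
    have "((\<lambda>t. exp (- c * t)) has_real_derivative (- c * exp (- c * t))) (at t)"
      by (auto intro!: derivative_eq_intros)
    with 2 show ?thesis by (simp add: decay_coeff_def c_def)
  next
    case 3
    have dA: "(A has_real_derivative lam * exp (- mu * t)) (at t)"
      unfolding A_def using assms by (auto intro!: derivative_eq_intros)
    have "((\<lambda>t. exp (- c * t) * A t ^ Suc r / fact (Suc r)) has_real_derivative
        (- c * exp (- c * t) * A t ^ Suc r
          + exp (- c * t) * (real (Suc r) * A t ^ r * (lam * exp (- mu * t)))) / fact (Suc r)) (at t)"
      by (auto intro!: derivative_eq_intros dA simp del: fact_Suc power_Suc of_nat_Suc)
    moreover have "(- c * exp (- c * t) * A t ^ Suc r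
          + exp (- c * t) * (real (Suc r) * A t ^ r * (lam * exp (- mu * t)))) / fact (Suc r)
       = - c * (exp (- c * t) * A t ^ Suc r / fact (Suc r))
         + lam * (exp (- (c + mu) * t) * A t ^ r / fact r)"
      by (simp add: exp_add[symmetric] field_simps del: of_nat_Suc)
    moreover have "decay_coeff lam mu m t k = exp (- c * t) * A t ^ Suc r / fact (Suc r)" for t
      using 3 by (simp add: decay_coeff_def c_def A_def)
    moreover have "decay_coeff lam mu m t (Suc k) = exp (- (c + mu) * t) * A t ^ r / fact r"
      using 3 by (simp add: decay_coeff_def c_def A_def algebra_simps)
    ultimately show ?thesis
      unfolding c_def[symmetric] by simp
  qed
qed

definition cdf_formula :: "real \<Rightarrow> real \<Rightarrow> nat \<Rightarrow> real \<Rightarrow> nat \<Rightarrow> real" where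
  "cdf_formula lam mu m t i = cum_pi_star (lam / mu) (Suc m)
     + (\<Sum>k\<le>m. decay_coeff lam mu m t k * ((if i \<le> k then 1 else 0) - cum_pi_star (lam / mu) (Suc k)))"

lemma cdf_formula_at_0: "cdf_formula lam mu m 0 i = (if i \<le> m then 1 else 0)"
proof -
  have "(\<Sum>k\<le>m. decay_coeff lam mu m 0 k * g k) = (\<Sum>k\<in>{m}. decay_coeff lam mu m 0 k * g k)"
    for g :: "nat \<Rightarrow> real"
    by (rule sum.mono_neutral_right) (auto simp: decay_coeff_def)
  then show ?thesis
    by (simp add: cdf_formula_def decay_coeff_def)
qed

lemma cdf_formula_backward_equation:
  assumes "lam > 0" "mu > 0"
  shows "((\<lambda>t. cdf_formula lam mu m t i) has_real_derivative
           jumps lam mu (cdf_formula lam mu m t) i - out_rate lam mu i * cdf_formula lam mu m t i) (at t)"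
proof -
  let ?K = "decay_coeff lam mu m t" and ?Q = "cum_pi_star (lam / mu)"
  have "((\<lambda>t. cdf_formula lam mu m t i) has_real_derivative
          (\<Sum>k\<le>m. (- (lam + mu * (real k + 1)) * ?K k + lam * ?K (Suc k))
             * ((if i \<le> k then 1 else 0) - ?Q (Suc k)))) (at t)"
    unfolding cdf_formula_def using assms
    by (auto intro!: derivative_eq_intros has_real_derivative_decay_coeff)
  moreover have "cdf_formula lam mu m t
      = (\<lambda>l. ?Q (Suc m) + (\<Sum>k\<le>m. ?K k * ((if l \<le> k then 1 else 0) - ?Q (Suc k))))"
    by (simp add: fun_eq_iff cdf_formula_def)
  ultimately show ?thesis
    using generator_cdf_mixture[of ?K m ?Q lam mu i] cum_pi_star_balance[OF assms]
    by (simp add: decay_coeff_def cum_pi_star_def)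
qed

lemma cdf_formula_integral_equation:
  assumes "lam > 0" "mu > 0" "t \<ge> 0"
  shows "((\<lambda>s. exp (- out_rate lam mu i * s) * jumps lam mu (cdf_formula lam mu m (t - s)) i)
           has_integral cdf_formula lam mu m t i - exp (- out_rate lam mu i * t) * (if i \<le> m then 1 else 0))
         {0..t}"
proof -
  define q where "q = out_rate lam mu i"
  define V where "V = cdf_formula lam mu m"
  define P where "P = (\<lambda>s. exp (- q * s) * V (t - s) i)"
  have "(P has_real_derivative - (exp (- q * s) * jumps lam mu (V (t - s)) i)) (at s)" for s
  proof -
    have "((\<lambda>s. V (t - s) i) has_real_derivative
            (jumps lam mu (V (t - s)) i - q * V (t - s) i) * (-1)) (at s)"
      unfolding V_def q_def
      by (rule DERIV_chain2[OF cdf_formula_backward_equation[OF assms(1,2)]])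
         (auto intro!: derivative_eq_intros)
    then show ?thesis
      unfolding P_def by (auto intro!: derivative_eq_intros simp: algebra_simps)
  qed
  then have "((\<lambda>s. - (exp (- q * s) * jumps lam mu (V (t - s)) i)) has_integral P t - P 0) {0..t}"
    using assms(3)
    by (intro fundamental_theorem_of_calculus)
       (auto simp flip: has_real_derivative_iff_has_vector_derivative
         intro: has_field_derivative_at_within)
  from has_integral_neg[OF this] show ?thesis
    by (simp add: P_def V_def q_def cdf_formula_at_0)
qed

lemma sum_exp_series_le_exp:
  fixes a :: real
  assumes "a \<ge> 0"
  shows "(\<Sum>r\<le>m. a ^ r / fact r) \<le> exp a"
proof -
  have "(\<lambda>r. a ^ r / fact r) sums exp a"
    using exp_converges[of a] by (simp add: divide_inverse mult.commute)
  then have "(\<Sum>r\<le>m. a ^ r / fact r) \<le> (\<Sum>r. a ^ r / fact r)"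
    using assms by (intro sum_le_suminf) (auto simp: sums_iff)
  with \<open>(\<lambda>r. a ^ r / fact r) sums exp a\<close> show ?thesis
    by (simp add: sums_iff)
qed

lemma sum_decay_coeff_le:
  assumes "lam > 0" "mu > 0" "t \<ge> 0"
  shows "(\<Sum>k\<le>m. decay_coeff lam mu m t k) \<le> exp (- mu * t - (lam / mu) * (exp (- mu * t) + mu * t - 1))"
proof -
  define a where "a = (lam / mu) * (1 - exp (- mu * t))"
  have "a \<ge> 0" using assms by (simp add: a_def)
  have "(\<Sum>k\<le>m. decay_coeff lam mu m t k)
      \<le> (\<Sum>k\<le>m. exp (- (lam + mu) * t) * (a ^ (m - k) / fact (m - k)))"
  proof (rule sum_mono)
    fix k assume "k \<in> {..m}"
    then have eq: "decay_coeff lam mu m t k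
        = exp (- (lam + mu * (real k + 1)) * t) * (a ^ (m - k) / fact (m - k))"
      by (simp add: decay_coeff_def a_def)
    have "exp (- (lam + mu * (real k + 1)) * t) \<le> exp (- (lam + mu) * t)"
      using assms by (simp add: mult_right_mono algebra_simps)
    moreover have "a ^ (m - k) / fact (m - k) \<ge> 0"
      using \<open>a \<ge> 0\<close> by simp
    ultimately show "decay_coeff lam mu m t k \<le> exp (- (lam + mu) * t) * (a ^ (m - k) / fact (m - k))"
      unfolding eq by (rule mult_right_mono)
  qed
  also have "\<dots> = exp (- (lam + mu) * t) * (\<Sum>k\<le>m. a ^ (m - k) / fact (m - k))"
    by (simp add: sum_distrib_left)
  also have "(\<Sum>k\<le>m. a ^ (m - k) / fact (m - k)) = (\<Sum>r\<le>m. a ^ r / fact r)"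
    by (rule sum.reindex_bij_witness[where i="\<lambda>k. m - k" and j="\<lambda>k. m - k"]) auto
  also have "exp (- (lam + mu) * t) * (\<Sum>r\<le>m. a ^ r / fact r) \<le> exp (- (lam + mu) * t) * exp a"
    using \<open>a \<ge> 0\<close> by (intro mult_left_mono sum_exp_series_le_exp) auto
  also have "\<dots> = exp (- mu * t - (lam / mu) * (exp (- mu * t) + mu * t - 1))"
    using assms by (simp add: a_def exp_add[symmetric] field_simps)
  finally show ?thesis .
qed

lemma sum_decay_coeff_le_1:
  assumes "lam > 0" "mu > 0" "t \<ge> 0"
  shows "(\<Sum>k\<le>m. decay_coeff lam mu m t k) \<le> 1"
proof -
  have "exp (- mu * t) + mu * t - 1 \<ge> 0"
    using exp_ge_add_one_self[of "- mu * t"] by simp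
  then have "(lam / mu) * (exp (- mu * t) + mu * t - 1) \<ge> 0" "mu * t \<ge> 0"
    using assms by simp_all
  then have "- mu * t - (lam / mu) * (exp (- mu * t) + mu * t - 1) \<le> 0"
    by linarith
  then have "exp (- mu * t - (lam / mu) * (exp (- mu * t) + mu * t - 1)) \<le> 1"
    by simp
  with sum_decay_coeff_le[OF assms, of m] show ?thesis
    by linarith
qed

lemma abs_cdf_formula_le:
  assumes "lam > 0" "mu > 0" "t \<ge> 0"
  shows "\<bar>cdf_formula lam mu m t i\<bar> \<le> 2"
proof -
  let ?Q = "cum_pi_star (lam / mu)"
  have "lam / mu > 0" using assms by simp
  have "\<bar>decay_coeff lam mu m t k * ((if i \<le> k then 1 else 0) - ?Q (Suc k))\<bar>
      \<le> decay_coeff lam mu m t k" for k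
    using cum_pi_star_nonneg[OF \<open>lam / mu > 0\<close>, of "Suc k"]
      cum_pi_star_le_1[OF \<open>lam / mu > 0\<close>, of "Suc k"] decay_coeff_nonneg[of lam mu t m k] assms
    by (auto simp: abs_mult intro!: mult_left_le)
  then have "\<bar>cdf_formula lam mu m t i\<bar>
      \<le> \<bar>?Q (Suc m)\<bar> + (\<Sum>k\<le>m. decay_coeff lam mu m t k)"
    unfolding cdf_formula_def
    by (intro order.trans[OF abs_triangle_ineq add_left_mono] order.trans[OF sum_abs sum_mono])
  also have "\<dots> \<le> 1 + 1"
    using cum_pi_star_nonneg[OF \<open>lam / mu > 0\<close>] cum_pi_star_le_1[OF \<open>lam / mu > 0\<close>]
      sum_decay_coeff_le_1[OF assms, of m]
    by (intro add_mono) auto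
  finally show ?thesis by simp
qed

section \<open>Convergence of the jump expansion\<close>

lemma abs_jumps_le:
  assumes "lam \<ge> 0" "mu \<ge> 0" and f: "\<And>k. \<bar>f k\<bar> \<le> B * 2 ^ k"
  shows "\<bar>jumps lam mu f i\<bar> \<le> (2 * lam + mu) * B * 2 ^ i"
proof -
  have "B \<ge> 0" using f[of 0] by simp
  have "\<bar>\<Sum>k<i. f k\<bar> \<le> (\<Sum>k<i. B * 2 ^ k)"
    using f by (intro order.trans[OF sum_abs sum_mono])
  also have "\<dots> \<le> B * 2 ^ i"
  proof -
    have "(\<Sum>k<i. (2::real) ^ k) \<le> 2 ^ i"
      by (induction i) auto
    then show ?thesis
      using \<open>B \<ge> 0\<close> by (simp add: sum_distrib_left[symmetric] mult_left_mono)
  qed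
  finally have "\<bar>mu * (\<Sum>k<i. f k)\<bar> \<le> mu * (B * 2 ^ i)"
    using assms by (simp add: abs_mult mult_left_mono)
  moreover have "\<bar>lam * f (Suc i)\<bar> \<le> lam * (B * 2 ^ Suc i)"
    using assms f[of "Suc i"] by (simp add: abs_mult mult_left_mono)
  ultimately show ?thesis
    unfolding jumps_def by (auto simp: algebra_simps)
qed

(* Each iteration halves the bound: the weight 2^i absorbs the jump to i+1 and the sum over
   k < i, and the rate 3 lam + 2 mu makes the exponential factor integrate to at most
   1 / (2 (2 lam + mu)). *)
lemma jump_iteration_bound:
  fixes E :: "nat \<Rightarrow> real \<Rightarrow> nat \<Rightarrow> real"
  assumes "lam > 0" "mu > 0"
    and E0: "\<And>t i. t \<ge> 0 \<Longrightarrow> \<bar>E 0 t i\<bar> \<le> C"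
    and step: "\<And>N t i. t \<ge> 0 \<Longrightarrow>
      ((\<lambda>s. exp (- out_rate lam mu i * s) * jumps lam mu (E N (t - s)) i)
        has_integral E (Suc N) t i) {0..t}"
    and "t \<ge> 0"
  shows "\<bar>E N t i\<bar> \<le> C * 2 ^ i * exp ((3 * lam + 2 * mu) * t) / 2 ^ N"
  using \<open>t \<ge> 0\<close>
proof (induction N arbitrary: t i)
  case 0
  have "C \<ge> 0" using E0[of t i] 0 by linarith
  moreover have "1 \<le> (2::real) ^ i" "1 \<le> exp ((3 * lam + 2 * mu) * t)"
    using assms 0 by simp_all
  then have "1 * 1 \<le> (2::real) ^ i * exp ((3 * lam + 2 * mu) * t)"
    by (intro mult_mono) auto
  ultimately have "C \<le> C * (2 ^ i * exp ((3 * lam + 2 * mu) * t))"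
    by (simp add: mult_le_cancel_left1)
  with E0[of t i] 0 show ?case
    by (simp add: mult.assoc)
next
  case (Suc N)
  define \<beta> where "\<beta> = 3 * lam + 2 * mu"
  define q where "q = out_rate lam mu i"
  define C' where "C' = C * 2 ^ i * exp (\<beta> * t) * (2 * lam + mu) / 2 ^ N"
  have "real i * mu \<ge> 0"
    using assms by simp
  then have "2 * (2 * lam + mu) \<le> q + \<beta>"
    unfolding q_def \<beta>_def out_rate_def by (simp add: algebra_simps)
  then have "q + \<beta> > 0"
    using assms(1,2) by (simp add: algebra_simps)
  have bound: "\<bar>exp (- q * s) * jumps lam mu (E N (t - s)) i\<bar> \<le> C' * exp (- (q + \<beta>) * s)"
    if "s \<in> {0..t}" for s
  proof -
    have "\<bar>jumps lam mu (E N (t - s)) i\<bar>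
        \<le> (2 * lam + mu) * (C * exp (\<beta> * (t - s)) / 2 ^ N) * 2 ^ i"
      using Suc.IH[of "t - s"] that assms by (intro abs_jumps_le) (auto simp: \<beta>_def field_simps)
    then have "\<bar>exp (- q * s) * jumps lam mu (E N (t - s)) i\<bar>
        \<le> exp (- q * s) * ((2 * lam + mu) * (C * exp (\<beta> * (t - s)) / 2 ^ N) * 2 ^ i)"
      unfolding abs_mult abs_exp_cancel by (rule mult_left_mono) simp
    also have "\<dots> = (2 * lam + mu) * C * 2 ^ i / 2 ^ N * (exp (- q * s) * exp (\<beta> * (t - s)))"
      by (simp add: field_simps)
    also have "exp (- q * s) * exp (\<beta> * (t - s)) = exp (\<beta> * t) * exp (- (q + \<beta>) * s)"
      by (simp add: exp_add[symmetric] algebra_simps)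
    also have "(2 * lam + mu) * C * 2 ^ i / 2 ^ N * (exp (\<beta> * t) * exp (- (q + \<beta>) * s))
        = C' * exp (- (q + \<beta>) * s)"
      by (simp add: C'_def field_simps)
    finally show ?thesis .
  qed
  have int_E: "((\<lambda>s. exp (- q * s) * jumps lam mu (E N (t - s)) i)
      has_integral E (Suc N) t i) {0..t}"
    unfolding q_def by (rule step[OF Suc.prems])
  have int_bound: "((\<lambda>s. C' * exp (- (q + \<beta>) * s))
      has_integral C' * ((1 - exp (- (q + \<beta>) * t)) / (q + \<beta>))) {0..t}"
    using \<open>q + \<beta> > 0\<close> Suc.prems by (intro has_integral_mult_right has_integral_exp_minus) auto
  have "norm (integral {0..t} (\<lambda>s. exp (- q * s) * jumps lam mu (E N (t - s)) i))
      \<le> integral {0..t} (\<lambda>s. C' * exp (- (q + \<beta>) * s))"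
    by (rule integral_norm_bound_integral[OF has_integral_integrable[OF int_E]
          has_integral_integrable[OF int_bound]]) (unfold real_norm_def, erule bound)
  then have "\<bar>E (Suc N) t i\<bar> \<le> C' * ((1 - exp (- (q + \<beta>) * t)) / (q + \<beta>))"
    by (simp only: integral_unique[OF int_E] integral_unique[OF int_bound] real_norm_def)
  also have "\<dots> \<le> C' * (1 / (q + \<beta>))"
  proof (rule mult_left_mono)
    show "(1 - exp (- (q + \<beta>) * t)) / (q + \<beta>) \<le> 1 / (q + \<beta>)"
      using \<open>q + \<beta> > 0\<close> by (intro divide_right_mono) auto
    show "C' \<ge> 0"
      using E0[of 0 0] assms(1,2) by (simp add: C'_def)
  qed
  also have "\<dots> = (C * 2 ^ i * exp (\<beta> * t) / 2 ^ N) * ((2 * lam + mu) / (q + \<beta>))"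
    by (simp add: C'_def)
  also have "\<dots> \<le> (C * 2 ^ i * exp (\<beta> * t) / 2 ^ N) * (1 / 2)"
  proof (rule mult_left_mono)
    show "(2 * lam + mu) / (q + \<beta>) \<le> 1 / 2"
      using \<open>q + \<beta> > 0\<close> \<open>2 * (2 * lam + mu) \<le> q + \<beta>\<close> by (simp add: field_simps)
    show "C * 2 ^ i * exp (\<beta> * t) / 2 ^ N \<ge> 0"
      using E0[of 0 0] by simp
  qed
  finally show ?case by (simp add: \<beta>_def)
qed

lemma sums_jump_trans_atMost:
  assumes "lam > 0" "mu > 0" "t \<ge> 0"
  shows "(\<lambda>n. \<Sum>j\<le>m. jump_trans lam mu n t i j) sums cdf_formula lam mu m t i"
proof -
  define E where
    "E = (\<lambda>N u l. cdf_formula lam mu m u l - (\<Sum>n<N. \<Sum>j\<le>m. jump_trans lam mu n u l j))"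
  have step: "((\<lambda>s. exp (- out_rate lam mu i * s) * jumps lam mu (E N (t - s)) i)
      has_integral E (Suc N) t i) {0..t}"
    if "t \<ge> 0" for N t i
  proof -
    let ?q = "out_rate lam mu i"
    have int: "((\<lambda>s. exp (- ?q * s) * jumps lam mu (cdf_formula lam mu m (t - s)) i
              - (\<Sum>n<N. \<Sum>j\<le>m. exp (- ?q * s) * jumps lam mu (\<lambda>k. jump_trans lam mu n (t - s) k j) i))
          has_integral (cdf_formula lam mu m t i - exp (- ?q * t) * (if i \<le> m then 1 else 0))
            - (\<Sum>n<N. \<Sum>j\<le>m. jump_trans lam mu (Suc n) t i j)) {0..t}"
      using assms(1,2) that
      by (intro has_integral_diff has_integral_sum cdf_formula_integral_equation has_integral_jump_trans) auto
    have "(\<Sum>j\<le>m. jump_trans lam mu 0 t i j) = exp (- ?q * t) * (if i \<le> m then 1 else 0)"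
      by (simp add: sum.delta)
    then have val: "(cdf_formula lam mu m t i - exp (- ?q * t) * (if i \<le> m then 1 else 0))
          - (\<Sum>n<N. \<Sum>j\<le>m. jump_trans lam mu (Suc n) t i j) = E (Suc N) t i"
      by (simp only: E_def sum.lessThan_Suc_shift diff_diff_eq)
    have integrand: "exp (- ?q * s) * jumps lam mu (cdf_formula lam mu m (t - s)) i
              - (\<Sum>n<N. \<Sum>j\<le>m. exp (- ?q * s) * jumps lam mu (\<lambda>k. jump_trans lam mu n (t - s) k j) i)
        = exp (- ?q * s) * jumps lam mu (E N (t - s)) i" for s
      by (simp add: E_def jumps_diff jumps_sum sum_distrib_left right_diff_distrib)
    from int show ?thesis
      unfolding integrand val .
  qed
  have E0: "\<bar>E 0 t i\<bar> \<le> 2" if "t \<ge> 0" for t i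
    using abs_cdf_formula_le[OF assms(1,2) that] by (simp add: E_def)
  define g where "g = (\<lambda>N. 2 * 2 ^ i * exp ((3 * lam + 2 * mu) * t) / (2::real) ^ N)"
  from jump_iteration_bound[OF assms(1,2) E0 step assms(3)]
  have "\<forall>N. norm (E N t i) \<le> g N"
    by (simp add: g_def)
  moreover have "g \<longlonglongrightarrow> 0"
    unfolding g_def by (intro LIMSEQ_divide_realpow_zero) auto
  ultimately have "(\<lambda>N. E N t i) \<longlonglongrightarrow> 0"
    by (rule Lim_null_comparison[OF always_eventually])
  then have "(\<lambda>N. cdf_formula lam mu m t i - E N t i) \<longlonglongrightarrow> cdf_formula lam mu m t i - 0"
    by (intro tendsto_diff tendsto_const)
  then show ?thesis
    by (simp add: sums_def E_def)
qed

lemma sums_jump_trans: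
  assumes "lam > 0" "mu > 0" "t \<ge> 0"
  shows "(\<lambda>n. jump_trans lam mu n t i j) sums trans_prob lam mu t i j"
proof -
  have "summable (\<lambda>n. jump_trans lam mu n t i j)"
  proof (cases j)
    case 0
    then show ?thesis
      using sums_jump_trans_atMost[OF assms, where m = 0 and i = i] by (simp add: sums_summable)
  next
    case (Suc j')
    have "(\<lambda>n. (\<Sum>l\<le>j. jump_trans lam mu n t i l) - (\<Sum>l\<le>j'. jump_trans lam mu n t i l))
        sums (cdf_formula lam mu j t i - cdf_formula lam mu j' t i)"
      by (intro sums_diff sums_jump_trans_atMost assms)
    with Suc show ?thesis
      by (simp add: sums_summable)
  qed
  then show ?thesis
    by (simp add: trans_prob_def summable_sums)
qed

lemma sum_trans_prob_atMost:
  assumes "lam > 0" "mu > 0" "t \<ge> 0"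
  shows "(\<Sum>j\<le>m. trans_prob lam mu t i j) = cdf_formula lam mu m t i"
proof -
  have "(\<lambda>n. \<Sum>j\<le>m. jump_trans lam mu n t i j) sums (\<Sum>j\<le>m. trans_prob lam mu t i j)"
    by (intro sums_sum sums_jump_trans assms)
  from this sums_jump_trans_atMost[OF assms] show ?thesis
    by (rule sums_unique2)
qed

lemma abs_trans_prob_le:
  assumes "lam > 0" "mu > 0" "t \<ge> 0"
  shows "\<bar>trans_prob lam mu t i j\<bar> \<le> 4"
proof (cases j)
  case 0
  then have "trans_prob lam mu t i j = cdf_formula lam mu 0 t i"
    using sum_trans_prob_atMost[OF assms, where m = 0] by simp
  then show ?thesis
    using abs_cdf_formula_le[OF assms, where m = 0 and i = i] by linarith
next
  case (Suc j')
  then have "(\<Sum>l\<le>j. trans_prob lam mu t i l)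
      = (\<Sum>l\<le>j'. trans_prob lam mu t i l) + trans_prob lam mu t i j"
    by simp
  then have "trans_prob lam mu t i j = cdf_formula lam mu j t i - cdf_formula lam mu j' t i"
    unfolding sum_trans_prob_atMost[OF assms] by linarith
  then show ?thesis
    using abs_cdf_formula_le[OF assms, where m = j and i = i]
      abs_cdf_formula_le[OF assms, where m = j' and i = i]
    by linarith
qed

section \<open>Averaging over the initial distribution\<close>

lemma sum_nat_le_real:
  fixes f :: "nat \<Rightarrow> 'a::comm_monoid_add"
  shows "(\<Sum>n\<in>{n. real n \<le> x}. f n) = (if x < 0 then 0 else \<Sum>n\<le>nat \<lfloor>x\<rfloor>. f n)"
proof -
  have "{n. real n \<le> x} = (if x < 0 then {} else {..nat \<lfloor>x\<rfloor>})"
    by (auto intro: le_nat_floor) linarith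
  then show ?thesis by simp
qed

lemma Pi_star_of_nat: "Pi_star \<theta> (real k) = cum_pi_star \<theta> (Suc k)"
  unfolding Pi_star_def sum_nat_le_real by (simp add: cum_pi_star_def lessThan_Suc_atMost)

lemma cdfT_of_nat: "cdfT tau (real k) = (\<Sum>i\<le>k. tau i)"
  unfolding cdfT_def sum_nat_le_real by simp

lemma distF_of_nat_eq_suminf:
  assumes "lam > 0" "mu > 0" "t \<ge> 0" "\<And>n. tau n \<ge> 0" "summable tau"
  shows "distF lam mu tau t (real M) = (\<Sum>i. tau i * cdf_formula lam mu M t i)"
proof -
  have "summable (\<lambda>i. tau i * trans_prob lam mu t i j)" for j
  proof (rule summable_comparison_test)
    show "summable (\<lambda>i. 4 * tau i)"
      using assms(5) by (rule summable_mult)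
    show "\<exists>N. \<forall>n\<ge>N. norm (tau n * trans_prob lam mu t n j) \<le> 4 * tau n"
      using abs_trans_prob_le[OF assms(1-3)] assms(4)
      by (auto simp: abs_mult mult.commute intro!: mult_left_mono)
  qed
  then have "(\<Sum>j\<le>M. \<Sum>i. tau i * trans_prob lam mu t i j)
      = (\<Sum>i. \<Sum>j\<le>M. tau i * trans_prob lam mu t i j)"
    by (rule suminf_sum[symmetric])
  then show ?thesis
    unfolding distF_def sum_nat_le_real
    by (simp add: sum_distrib_left[symmetric] sum_trans_prob_atMost[OF assms(1-3)])
qed

lemma distF_of_nat:
  assumes "lam > 0" "mu > 0" "t \<ge> 0" "\<And>n. tau n \<ge> 0" "tau sums 1"
  shows "distF lam mu tau t (real M) = cum_pi_star (lam / mu) (Suc M)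
      + (\<Sum>k\<le>M. decay_coeff lam mu M t k * (cdfT tau (real k) - cum_pi_star (lam / mu) (Suc k)))"
proof -
  let ?K = "decay_coeff lam mu M t" and ?Q = "cum_pi_star (lam / mu)"
  have "(\<lambda>i. if i \<le> k then tau i else 0) sums cdfT tau (real k)" for k
    using sums_If_finite_set[of "{..k}" tau] by (simp add: cdfT_of_nat)
  then have "(\<lambda>i. ?Q (Suc M) * tau i
        + (\<Sum>k\<le>M. ?K k * (if i \<le> k then tau i else 0) - ?K k * ?Q (Suc k) * tau i))
      sums (?Q (Suc M) * 1 + (\<Sum>k\<le>M. ?K k * cdfT tau (real k) - ?K k * ?Q (Suc k) * 1))"
    by (intro sums_add sums_mult sums_sum sums_diff assms(5))
  moreover have "?Q (Suc M) * tau i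
        + (\<Sum>k\<le>M. ?K k * (if i \<le> k then tau i else 0) - ?K k * ?Q (Suc k) * tau i)
      = tau i * cdf_formula lam mu M t i" for i
  proof -
    have "?Q (Suc M) * tau i
          + (\<Sum>k\<le>M. ?K k * (if i \<le> k then tau i else 0) - ?K k * ?Q (Suc k) * tau i)
        = tau i * ?Q (Suc M) + (\<Sum>k\<le>M. tau i * (?K k * ((if i \<le> k then 1 else 0) - ?Q (Suc k))))"
      by (intro arg_cong2[where f = "(+)"] sum.cong) (auto simp: algebra_simps)
    then show ?thesis
      by (simp add: cdf_formula_def distrib_left sum_distrib_left)
  qed
  ultimately have "(\<lambda>i. tau i * cdf_formula lam mu M t i)
      sums (?Q (Suc M) + (\<Sum>k\<le>M. ?K k * (cdfT tau (real k) - ?Q (Suc k))))"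
    by (simp add: right_diff_distrib)
  then show ?thesis
    using distF_of_nat_eq_suminf[OF assms(1-4) sums_summable[OF assms(5)]]
    by (simp add: sums_iff)
qed

lemma Pi_star_minus_distF_of_nat:
  assumes "lam > 0" "mu > 0" "t \<ge> 0" "\<And>n. tau n \<ge> 0" "tau sums 1"
  shows "Pi_star (lam / mu) (real M) - distF lam mu tau t (real M)
       = (\<Sum>k\<le>M. decay_coeff lam mu M t k * (Pi_star (lam / mu) (real k) - cdfT tau (real k)))"
  unfolding distF_of_nat[OF assms] Pi_star_of_nat
  by (simp add: right_diff_distrib sum_subtractf)

lemma Pi_star_bounds:
  assumes "\<theta> > 0"
  shows "0 \<le> Pi_star \<theta> x" "Pi_star \<theta> x \<le> 1"
proof -
  have "Pi_star \<theta> x = (if x < 0 then 0 else cum_pi_star \<theta> (Suc (nat \<lfloor>x\<rfloor>)))"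
    unfolding Pi_star_def sum_nat_le_real by (simp add: cum_pi_star_def lessThan_Suc_atMost)
  then show "0 \<le> Pi_star \<theta> x" "Pi_star \<theta> x \<le> 1"
    using cum_pi_star_nonneg[OF assms] cum_pi_star_le_1[OF assms] by auto
qed

lemma cdfT_bounds:
  assumes "\<And>n. tau n \<ge> 0" "tau sums 1"
  shows "0 \<le> cdfT tau x" "cdfT tau x \<le> 1"
proof -
  have "(\<Sum>n\<le>k. tau n) \<le> suminf tau" for k
    using assms by (intro sum_le_suminf) (auto simp: sums_summable)
  then show "0 \<le> cdfT tau x" "cdfT tau x \<le> 1"
    using assms unfolding cdfT_def sum_nat_le_real
    by (auto simp: sums_iff intro: sum_nonneg)
qed

lemma abs_Pi_star_minus_distF_le:
  assumes "lam > 0" "mu > 0" "t \<ge> 0" "\<And>n. tau n \<ge> 0" "tau sums 1"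
    and S: "\<And>y. \<bar>Pi_star (lam / mu) y - cdfT tau y\<bar> \<le> S"
  shows "\<bar>Pi_star (lam / mu) x - distF lam mu tau t x\<bar>
       \<le> S * exp (- mu * t - (lam / mu) * (exp (- mu * t) + mu * t - 1))"
proof -
  have "S \<ge> 0"
    using S[of x] by linarith
  show ?thesis
  proof (cases "x < 0")
    case True
    with \<open>S \<ge> 0\<close> show ?thesis
      unfolding Pi_star_def distF_def sum_nat_le_real by simp
  next
    case False
    define M where "M = nat \<lfloor>x\<rfloor>"
    have "Pi_star (lam / mu) x - distF lam mu tau t x
        = Pi_star (lam / mu) (real M) - distF lam mu tau t (real M)"
      using False unfolding Pi_star_def distF_def sum_nat_le_real by (simp add: M_def)
    also have "\<dots>
        = (\<Sum>k\<le>M. decay_coeff lam mu M t k * (Pi_star (lam / mu) (real k) - cdfT tau (real k)))"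
      by (rule Pi_star_minus_distF_of_nat[OF assms(1-5)])
    finally have "\<bar>Pi_star (lam / mu) x - distF lam mu tau t x\<bar>
        \<le> (\<Sum>k\<le>M. decay_coeff lam mu M t k * S)"
      using decay_coeff_nonneg[of lam mu t M] assms(1-3) S
      by (auto simp: abs_mult intro!: order.trans[OF sum_abs sum_mono] mult_left_mono)
    also have "\<dots> = S * (\<Sum>k\<le>M. decay_coeff lam mu M t k)"
      by (simp add: sum_distrib_left mult.commute)
    also have "\<dots> \<le> S * exp (- mu * t - (lam / mu) * (exp (- mu * t) + mu * t - 1))"
      by (rule mult_left_mono[OF sum_decay_coeff_le[OF assms(1-3)] \<open>S \<ge> 0\<close>])
    finally show ?thesis .
  qed
qed

theorem mainTheorem5:
  fixes lam mu :: real and tau :: "nat \<Rightarrow> real" and t :: real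
  assumes "lam > 0" and "mu > 0"
    and "\<And>n. tau n \<ge> 0" and "tau sums 1"
    and "t \<ge> 0"
  shows "(SUP x::real. \<bar>Pi_star (lam / mu) x - distF lam mu tau t x\<bar>)
      \<le> (SUP x::real. \<bar>Pi_star (lam / mu) x - cdfT tau x\<bar>)
         * exp (- mu * t - (lam / mu) * (exp (- mu * t) + mu * t - 1))"
proof -
  let ?S = "SUP y. \<bar>Pi_star (lam / mu) y - cdfT tau y\<bar>"
  have "lam / mu > 0"
    using assms by simp
  then have "\<bar>Pi_star (lam / mu) y - cdfT tau y\<bar> \<le> 1" for y
    using Pi_star_bounds[of "lam / mu" y] cdfT_bounds[OF assms(3,4), of y] by linarith
  then have "bdd_above (range (\<lambda>y. \<bar>Pi_star (lam / mu) y - cdfT tau y\<bar>))"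
    by (intro bdd_aboveI2)
  then have "\<bar>Pi_star (lam / mu) y - cdfT tau y\<bar> \<le> ?S" for y
    by (rule cSUP_upper[OF UNIV_I])
  from abs_Pi_star_minus_distF_le[OF assms(1,2,5,3,4) this]
  show ?thesis
    by (auto intro!: cSUP_least)
qed

end
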